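(* Let $\Omega\subset\mathbb{R}^n$ be a domain, $\mathcal{S}$ any basis of shapes in $\Omega$, and $1\le p<\infty$. Then $\mathrm{BMO}^p_{\mathcal{S}}(\Omega)\subset L^p_{loc}(\Omega)$.
   Context: A domain is an open connected set. A shape is an open set $S\subset\mathbb{R}^n$ with $0<|S|<\infty$. A basis of shapes in $\Omega$ is a collection of shapes contained in $\Omega$ covering $\Omega$. For $f\in L^1(S)$, $f_S=\frac1{|S|}\int_Sf$. $\mathrm{BMO}^p_{\mathcal{S}}(\Omega)$ is the space of functions $f$ with $f\in L^1(S)$ for all $S\in\mathcal{S}$ such that there is $K\ge0$ with $\big(\frac1{|S|}\int_S|f-f_S|^p\big)^{1/p}\le K$ for all $S\in\mathcal{S}$. *)

theory Defs
  imports "HOL-Analysis.Analysis"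
begin

definition domain :: "'a::euclidean_space set \<Rightarrow> bool" where
  "domain \<Omega> \<longleftrightarrow> open \<Omega> \<and> connected \<Omega>"

definition shape :: "'a::euclidean_space set \<Rightarrow> bool" where
  "shape S \<longleftrightarrow> open S \<and> 0 < emeasure lebesgue S \<and> emeasure lebesgue S < \<infinity>"

definition basis_of_shapes :: "'a::euclidean_space set set \<Rightarrow> 'a set \<Rightarrow> bool" where
  "basis_of_shapes \<S> \<Omega> \<longleftrightarrow> (\<forall>S\<in>\<S>. shape S \<and> S \<subseteq> \<Omega>) \<and> \<Union>\<S> = \<Omega>"

definition avg :: "('a::euclidean_space \<Rightarrow> real) \<Rightarrow> 'a set \<Rightarrow> real" where
  "avg f S = (1 / measure lebesgue S) * (LINT x:S|lebesgue. f x)"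

definition mean_osc :: "real \<Rightarrow> ('a::euclidean_space \<Rightarrow> real) \<Rightarrow> 'a set \<Rightarrow> ennreal" where
  "mean_osc p f S = (\<integral>\<^sup>+ x\<in>S. ennreal (\<bar>f x - avg f S\<bar> powr p) \<partial>lebesgue) / emeasure lebesgue S"

definition BMO :: "real \<Rightarrow> 'a::euclidean_space set set \<Rightarrow> 'a set \<Rightarrow> ('a \<Rightarrow> real) set" where
  "BMO p \<S> \<Omega> = {f. (\<forall>S\<in>\<S>. set_integrable lebesgue S f) \<and>
      (\<exists>K\<ge>0. \<forall>S\<in>\<S>. mean_osc p f S \<le> ennreal (K powr p))}"

definition Lp_loc :: "real \<Rightarrow> 'a::euclidean_space set \<Rightarrow> ('a \<Rightarrow> real) set" where
  "Lp_loc p \<Omega> = {f. \<forall>K. compact K \<and> K \<subseteq> \<Omega> \<longrightarrow>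
      set_borel_measurable lebesgue K f \<and>
      (\<integral>\<^sup>+ x\<in>K. ennreal (\<bar>f x\<bar> powr p) \<partial>lebesgue) < \<infinity>}"

end

theory Submission
  imports Defs
begin

text \<open>On a shape \<open>S\<close>, \<open>|f| \<le> |f - f\<^sub>S| + |f\<^sub>S|\<close> and \<open>|S| < \<infinity>\<close>, so a finite mean oscillation
  forces \<open>f \<in> L\<^sup>p(S)\<close>. A compact \<open>K \<subseteq> \<Omega>\<close> is covered by finitely many of the open shapes of the
  basis, hence \<open>\<integral>\<^sub>K |f|\<^sup>p\<close> is bounded by a finite sum of such integrals.\<close>

lemma powr_add_le_two_powr:
  fixes a b p :: real
  assumes "0 \<le> a" "0 \<le> b" "0 < p"
  shows "(a + b) powr p \<le> 2 powr p * (a powr p + b powr p)"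
proof -
  have "(a + b) powr p \<le> (2 * max a b) powr p"
    using assms by (intro powr_mono2) auto
  also have "\<dots> = 2 powr p * max a b powr p"
    using assms by (simp add: powr_mult)
  also have "\<dots> \<le> 2 powr p * (a powr p + b powr p)"
    by (simp add: max_def)
  finally show ?thesis .
qed

lemma set_borel_measurable_if_set_integrable:
  "set_integrable M S f \<Longrightarrow> set_borel_measurable M S f"
  unfolding set_integrable_def set_borel_measurable_def by (rule borel_measurable_integrable)

lemma borel_measurable_abs_diff_powr_indicator:
  fixes f :: "'a \<Rightarrow> real"
  assumes "set_borel_measurable M S f" "S \<in> sets M"
  shows "(\<lambda>x. ennreal (\<bar>f x - c\<bar> powr p) * indicator S x) \<in> borel_measurable M"
proof -
  have [measurable]: "(\<lambda>x. indicator S x * f x) \<in> borel_measurable M" "S \<in> sets M"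
    using assms unfolding set_borel_measurable_def by auto
  have "(\<lambda>x. ennreal (\<bar>f x - c\<bar> powr p) * indicator S x)
      = (\<lambda>x. ennreal (\<bar>indicator S x * f x - c\<bar> powr p) * indicator S x)"
    by (auto simp: fun_eq_iff indicator_def)
  also have "\<dots> \<in> borel_measurable M"
    by measurable
  finally show ?thesis .
qed

lemma set_nn_integral_abs_powr_less_top_shift:
  fixes f :: "'a \<Rightarrow> real"
  assumes S: "S \<in> sets M" "emeasure M S < \<infinity>" and f: "set_borel_measurable M S f"
    and p: "0 < p"
    and osc: "(\<integral>\<^sup>+ x\<in>S. ennreal (\<bar>f x - c\<bar> powr p) \<partial>M) < \<infinity>"
  shows "(\<integral>\<^sup>+ x\<in>S. ennreal (\<bar>f x\<bar> powr p) \<partial>M) < \<infinity>"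
proof -
  have pointwise: "ennreal (\<bar>f x\<bar> powr p) * indicator S x
      \<le> ennreal (2 powr p) * (ennreal (\<bar>f x - c\<bar> powr p) * indicator S x
          + ennreal (\<bar>c\<bar> powr p) * indicator S x)" for x
  proof (cases "x \<in> S")
    case True
    have "\<bar>f x\<bar> powr p \<le> (\<bar>f x - c\<bar> + \<bar>c\<bar>) powr p"
      using p by (intro powr_mono2) auto
    also have "\<dots> \<le> 2 powr p * (\<bar>f x - c\<bar> powr p + \<bar>c\<bar> powr p)"
      using p by (intro powr_add_le_two_powr) auto
    finally show ?thesis
      using True by (simp add: ennreal_mult[symmetric] ennreal_plus[symmetric] del: ennreal_plus)
  qed simp
  have "(\<integral>\<^sup>+ x\<in>S. ennreal (\<bar>f x\<bar> powr p) \<partial>M)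
      \<le> (\<integral>\<^sup>+ x. ennreal (2 powr p) * (ennreal (\<bar>f x - c\<bar> powr p) * indicator S x
          + ennreal (\<bar>c\<bar> powr p) * indicator S x) \<partial>M)"
    by (intro nn_integral_mono pointwise)
  also have "\<dots> = ennreal (2 powr p) * ((\<integral>\<^sup>+ x\<in>S. ennreal (\<bar>f x - c\<bar> powr p) \<partial>M)
      + ennreal (\<bar>c\<bar> powr p) * emeasure M S)"
    using S borel_measurable_abs_diff_powr_indicator[OF f S(1)]
    by (simp add: nn_integral_cmult nn_integral_add nn_integral_cmult_indicator)
  also have "\<dots> < \<infinity>"
    using osc S by (simp add: ennreal_mult_less_top less_top)
  finally show ?thesis .
qed

lemma set_nn_integral_less_top_finite_cover:
  fixes g :: "'a \<Rightarrow> ennreal"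
  assumes "finite F" "K \<subseteq> \<Union>F"
    and "\<And>S. S \<in> F \<Longrightarrow> (\<lambda>x. g x * indicator S x) \<in> borel_measurable M"
    and "\<And>S. S \<in> F \<Longrightarrow> (\<integral>\<^sup>+ x\<in>S. g x \<partial>M) < \<infinity>"
  shows "(\<integral>\<^sup>+ x\<in>K. g x \<partial>M) < \<infinity>"
proof -
  have "g x * indicator K x \<le> (\<Sum>S\<in>F. g x * indicator S x)" for x
  proof (cases "x \<in> K")
    case True
    then obtain S where "S \<in> F" "x \<in> S"
      using assms(2) by auto
    then have "g x * indicator K x = g x * indicator S x"
      using True by simp
    also have "\<dots> \<le> (\<Sum>S\<in>F. g x * indicator S x)"
      using \<open>S \<in> F\<close> assms(1) by (intro member_le_sum) auto
    finally show ?thesis .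
  qed simp
  then have "(\<integral>\<^sup>+ x\<in>K. g x \<partial>M) \<le> (\<integral>\<^sup>+ x. (\<Sum>S\<in>F. g x * indicator S x) \<partial>M)"
    by (intro nn_integral_mono)
  also have "\<dots> = (\<Sum>S\<in>F. \<integral>\<^sup>+ x\<in>S. g x \<partial>M)"
    using assms(3) by (intro nn_integral_sum) auto
  also have "\<dots> < \<infinity>"
    using assms(1,4) by simp
  finally show ?thesis .
qed

lemma set_nn_integral_mean_osc_less_top:
  assumes "shape S" "mean_osc p f S < \<infinity>"
  shows "(\<integral>\<^sup>+ x\<in>S. ennreal (\<bar>f x - avg f S\<bar> powr p) \<partial>lebesgue) < \<infinity>"
proof (rule ccontr)
  assume "\<not> ?thesis"
  moreover have "emeasure lebesgue S \<noteq> \<infinity>"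
    using assms(1) unfolding shape_def by auto
  ultimately have "mean_osc p f S = \<infinity>"
    unfolding mean_osc_def by (simp add: less_top[symmetric] ennreal_top_divide)
  then show False
    using assms(2) by simp
qed

lemma shape_set_nn_integral_abs_powr_less_top:
  fixes f :: "'a::euclidean_space \<Rightarrow> real"
  assumes S: "shape S" and f: "set_integrable lebesgue S f"
    and osc: "mean_osc p f S < \<infinity>" and p: "0 < p"
  shows "(\<integral>\<^sup>+ x\<in>S. ennreal (\<bar>f x\<bar> powr p) \<partial>lebesgue) < \<infinity>"
proof (rule set_nn_integral_abs_powr_less_top_shift[OF _ _ _ p])
  show "S \<in> sets lebesgue" "emeasure lebesgue S < \<infinity>"
    using S unfolding shape_def by auto
  show "set_borel_measurable lebesgue S f"
    using f by (rule set_borel_measurable_if_set_integrable)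
  show "(\<integral>\<^sup>+ x\<in>S. ennreal (\<bar>f x - avg f S\<bar> powr p) \<partial>lebesgue) < \<infinity>"
    using S osc by (rule set_nn_integral_mean_osc_less_top)
qed

lemma basis_of_shapes_finite_subcover:
  assumes "basis_of_shapes \<S> \<Omega>" "compact K" "K \<subseteq> \<Omega>"
  obtains F where "F \<subseteq> \<S>" "finite F" "K \<subseteq> \<Union>F"
proof -
  have "\<forall>S\<in>\<S>. open S" "K \<subseteq> \<Union>\<S>"
    using assms unfolding basis_of_shapes_def shape_def by auto
  then show ?thesis
    using assms(2) that by (meson compactE)
qed

lemma BMO_imp_Lp_on_basis_shape:
  assumes "basis_of_shapes \<S> \<Omega>" "f \<in> BMO p \<S> \<Omega>" "S \<in> \<S>" "0 < p"
  shows "set_integrable lebesgue S f"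
    and "(\<integral>\<^sup>+ x\<in>S. ennreal (\<bar>f x\<bar> powr p) \<partial>lebesgue) < \<infinity>"
proof -
  obtain C where f: "set_integrable lebesgue S f" and "mean_osc p f S \<le> ennreal (C powr p)"
    using assms(2,3) unfolding BMO_def by auto
  then have "mean_osc p f S < \<infinity>"
    by (simp add: le_less_trans)
  moreover have "shape S"
    using assms(1,3) unfolding basis_of_shapes_def by auto
  ultimately show "(\<integral>\<^sup>+ x\<in>S. ennreal (\<bar>f x\<bar> powr p) \<partial>lebesgue) < \<infinity>"
    using f assms(4) by (intro shape_set_nn_integral_abs_powr_less_top)
  show "set_integrable lebesgue S f"
    by (fact f)
qed

lemma Lp_on_subset_of_finite_cover:
  fixes f :: "'a \<Rightarrow> real"
  assumes "finite F" "K \<subseteq> \<Union>F" "K \<in> sets M" "\<And>S. S \<in> F \<Longrightarrow> S \<in> sets M"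
    and "\<And>S. S \<in> F \<Longrightarrow> set_integrable M S f"
    and "\<And>S. S \<in> F \<Longrightarrow> (\<integral>\<^sup>+ x\<in>S. ennreal (\<bar>f x\<bar> powr p) \<partial>M) < \<infinity>"
  shows "set_borel_measurable M K f"
    and "(\<integral>\<^sup>+ x\<in>K. ennreal (\<bar>f x\<bar> powr p) \<partial>M) < \<infinity>"
proof -
  have "set_integrable M (\<Union>S\<in>F. S) f"
    using assms(1,4,5) by (intro set_integrable_UN) auto
  then have "set_borel_measurable M (\<Union>F) f"
    by (simp add: set_borel_measurable_if_set_integrable)
  then show "set_borel_measurable M K f"
    by (rule set_borel_measurable_subset[OF _ assms(3,2)])
  show "(\<integral>\<^sup>+ x\<in>K. ennreal (\<bar>f x\<bar> powr p) \<partial>M) < \<infinity>"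
  proof (rule set_nn_integral_less_top_finite_cover[OF assms(1,2)])
    fix S assume S: "S \<in> F"
    then have "set_borel_measurable M S f"
      by (intro set_borel_measurable_if_set_integrable assms(5))
    from borel_measurable_abs_diff_powr_indicator[OF this assms(4)[OF S], where c = 0]
    show "(\<lambda>x. ennreal (\<bar>f x\<bar> powr p) * indicator S x) \<in> borel_measurable M"
      by simp
    show "(\<integral>\<^sup>+ x\<in>S. ennreal (\<bar>f x\<bar> powr p) \<partial>M) < \<infinity>"
      using S by (rule assms(6))
  qed
qed

theorem lemma3p3:
  fixes \<Omega> :: "'a::euclidean_space set" and \<S> :: "'a set set" and p :: real
  assumes "domain \<Omega>" and "basis_of_shapes \<S> \<Omega>" and "1 \<le> p"
  shows "BMO p \<S> \<Omega> \<subseteq> Lp_loc p \<Omega>"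
proof (intro subsetI, unfold Lp_loc_def mem_Collect_eq, intro allI impI)
  fix f K
  assume f: "f \<in> BMO p \<S> \<Omega>" and K: "compact K \<and> K \<subseteq> \<Omega>"
  obtain F where F: "F \<subseteq> \<S>" "finite F" "K \<subseteq> \<Union>F"
    using basis_of_shapes_finite_subcover[OF assms(2)] K by blast
  have sets: "S \<in> sets lebesgue" if "S \<in> F" for S
    using that F(1) assms(2) unfolding basis_of_shapes_def shape_def by auto
  have "0 < p"
    using assms(3) by simp
  then have on_F: "set_integrable lebesgue S f"
      "(\<integral>\<^sup>+ x\<in>S. ennreal (\<bar>f x\<bar> powr p) \<partial>lebesgue) < \<infinity>" if "S \<in> F" for S
    using BMO_imp_Lp_on_basis_shape[OF assms(2) f subsetD[OF F(1) that]] by auto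
  have "K \<in> sets lebesgue"
    using K by (simp add: compact_imp_closed borel_closed)
  from Lp_on_subset_of_finite_cover[OF F(2,3) this sets on_F]
  show "set_borel_measurable lebesgue K f \<and>
      (\<integral>\<^sup>+ x\<in>K. ennreal (\<bar>f x\<bar> powr p) \<partial>lebesgue) < \<infinity>"
    by blast
qed

end
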